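(* For any $s\in\mathcal S=\{s\in\mathbb R^b:1\ge s_1\ge\cdots\ge s_b\ge0\}$, the matrix $J(s)$ is invertible.
   Context: Let $b\ge1$ be an integer and $\lambda=1-\gamma/N^{\alpha}$ with $N\ge1$, $\gamma\in(0,1]$, $\alpha>0$ (so $0\le\lambda<1$). $J(s)$ is the $b\times b$ tridiagonal matrix (the Jacobian of the mean-field vector field $f_k(s)=\lambda(s_{k-1}^2-s_k^2)-(s_k-s_{k+1})$, $s_0=1$, $s_{b+1}=0$) with diagonal entries $J_{kk}=-2\lambda s_k-1$ ($k=1,\dots,b$), superdiagonal entries $J_{k,k+1}=1$ and subdiagonal entries $J_{k+1,k}=2\lambda s_k$ ($k=1,\dots,b-1$). *)

theory Defs
  imports "Jordan_Normal_Form.Matrix" "Jordan_Normal_Form.Determinant"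
begin

text \<open>The vector s is given as a function
  nat => real with s k the k-th component (1-based, k = 1..b). Matrix rows/columns
  are 0-based, so row i corresponds to index k = i+1.
  Diagonal J_kk = -2 lam s_k - 1, superdiagonal J_{k,k+1} = 1, subdiagonal
  J_{k+1,k} = 2 lam s_k.\<close>
definition Jmat :: "nat \<Rightarrow> real \<Rightarrow> (nat \<Rightarrow> real) \<Rightarrow> real mat" where
  "Jmat b lam s = mat b b (\<lambda>(i, j).
     if j = i then - 2 * lam * s (i + 1) - 1
     else if j = i + 1 then 1
     else if i = j + 1 then 2 * lam * s (j + 1)
     else 0)"

end

theory Submission
  imports Defs
begin

text \<open>Write \<open>a(k) = 2 \<lambda> s(k) \<ge> 0\<close> and let \<open>v\<close> be a kernel vector of \<open>J(s)\<close>, padded by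
  \<open>v(b) = 0\<close>. Row \<open>i\<close> of \<open>J(s) v = 0\<close> says \<open>v(i+1) - a(i+1) v(i) = v(i) - a(i) v(i-1)\<close>, so
  \<open>v(k+1) = c + a(k+1) v(k)\<close> with the constant \<open>c = v(0)\<close>. As all \<open>a(k) \<ge> 0\<close>, induction gives
  \<open>c v(k) \<ge> c\<^sup>2\<close>; at \<open>k = b\<close> this forces \<open>c = 0\<close>, and then \<open>v = 0\<close>.\<close>

lemma det_nonzero_imp_invertible_mat:
  assumes A: "(A :: 'a :: field mat) \<in> carrier_mat n n" and det: "det A \<noteq> 0"
  shows "invertible_mat A"
proof -
  have "A \<in> Units (ring_mat TYPE('a) n ())" by (rule det_non_zero_imp_unit[OF A det])
  then obtain B where "B \<in> carrier_mat n n" "B * A = 1\<^sub>m n" "A * B = 1\<^sub>m n"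
    unfolding Units_def ring_mat_def by auto
  then show ?thesis
    using A unfolding invertible_mat_def inverts_mat_def by auto
qed

lemma affine_recurrence_sign:
  fixes a w :: "nat \<Rightarrow> real"
  assumes rec: "\<And>k. k < n \<Longrightarrow> w (Suc k) = w 0 + a (Suc k) * w k"
    and a_nonneg: "\<And>k. 0 < k \<Longrightarrow> k \<le> n \<Longrightarrow> 0 \<le> a k"
    and "k \<le> n"
  shows "(w 0)\<^sup>2 \<le> w 0 * w k"
  using \<open>k \<le> n\<close>
proof (induction k)
  case 0
  then show ?case by (simp add: power2_eq_square)
next
  case (Suc k)
  have "w 0 * w (Suc k) = (w 0)\<^sup>2 + a (Suc k) * (w 0 * w k)"
    using rec[of k] Suc.prems by (simp add: algebra_simps power2_eq_square)
  moreover have "0 \<le> a (Suc k) * (w 0 * w k)"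
    using Suc a_nonneg[of "Suc k"] by (simp add: order_trans[OF zero_le_power2])
  ultimately show ?case by simp
qed

lemma affine_recurrence_vanishing:
  fixes a w :: "nat \<Rightarrow> real"
  assumes rec: "\<And>k. k < n \<Longrightarrow> w (Suc k) = w 0 + a (Suc k) * w k"
    and a_nonneg: "\<And>k. 0 < k \<Longrightarrow> k \<le> n \<Longrightarrow> 0 \<le> a k"
    and end_zero: "w n = 0"
    and "k \<le> n"
  shows "w k = 0"
proof -
  have "(w 0)\<^sup>2 \<le> w 0 * w n"
    using affine_recurrence_sign[of n w a n] rec a_nonneg by blast
  then have "(w 0)\<^sup>2 \<le> 0"
    using end_zero by simp
  then have start_zero: "w 0 = 0" by simp
  show ?thesis
    using \<open>k \<le> n\<close> by (induction k) (simp_all add: start_zero rec)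
qed

lemma Jmat_carrier: "Jmat b lam s \<in> carrier_mat b b"
  unfolding Jmat_def by simp

lemma Jmat_mult_vec_index:
  fixes v :: "real vec"
  assumes v: "v \<in> carrier_vec b" and i: "i < b"
  shows "(Jmat b lam s *\<^sub>v v) $ i =
     (if 0 < i then 2 * lam * s i * v $ (i - 1) else 0)
     - (2 * lam * s (i + 1) + 1) * v $ i
     + (if i + 1 < b then v $ (i + 1) else 0)"
proof -
  let ?sub = "\<lambda>j. if i = j + 1 then 2 * lam * s (j + 1) * v $ j else 0"
  have "(Jmat b lam s *\<^sub>v v) $ i = (\<Sum>j<b. Jmat b lam s $$ (i, j) * v $ j)"
    using v i unfolding Jmat_def by (auto simp: mult_mat_vec_def scalar_prod_def lessThan_atLeast0)
  also have "\<dots> = (\<Sum>j<b. (if j = i then (- 2 * lam * s (i + 1) - 1) * v $ j else 0)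
       + (if j = i + 1 then v $ j else 0) + ?sub j)"
    by (rule sum.cong) (use i in \<open>auto simp: Jmat_def\<close>)
  also have "(\<Sum>j<b. ?sub j) = (if 0 < i then 2 * lam * s i * v $ (i - 1) else 0)"
  proof (cases "0 < i")
    case True
    then have "(\<Sum>j<b. ?sub j) = (\<Sum>j<b. if j = i - 1 then 2 * lam * s (j + 1) * v $ j else 0)"
      by (intro sum.cong) auto
    with True i show ?thesis by simp
  qed simp
  then have "(\<Sum>j<b. (if j = i then (- 2 * lam * s (i + 1) - 1) * v $ j else 0)
       + (if j = i + 1 then v $ j else 0) + ?sub j) =
     (if 0 < i then 2 * lam * s i * v $ (i - 1) else 0)
     - (2 * lam * s (i + 1) + 1) * v $ i
     + (if i + 1 < b then v $ (i + 1) else 0)"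
    using i by (simp only: sum.distrib) (simp add: algebra_simps)
  finally show ?thesis .
qed

lemma Jmat_kernel_trivial:
  assumes nonneg: "\<And>k. 0 < k \<Longrightarrow> k \<le> b \<Longrightarrow> 0 \<le> lam * s k"
    and v: "v \<in> carrier_vec b" and kernel: "Jmat b lam s *\<^sub>v v = 0\<^sub>v b"
  shows "v = 0\<^sub>v b"
proof -
  define w where "w j = (if j < b then v $ j else 0)" for j
  define a where "a k = 2 * lam * s k" for k
  have row: "(if 0 < i then a i * w (i - 1) else 0) - (a (Suc i) + 1) * w i + w (Suc i) = 0"
    if "i < b" for i
    using Jmat_mult_vec_index[OF v that, of lam s] kernel that by (auto simp: w_def a_def)
  have rec: "w (Suc k) = w 0 + a (Suc k) * w k" if "k < b" for k
    using that
  proof (induction k)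
    case 0
    then show ?case using row[of 0] by (simp add: algebra_simps)
  next
    case (Suc k)
    then show ?case using row[of "Suc k"] by (simp add: algebra_simps)
  qed
  have a_nonneg: "0 \<le> a k" if "0 < k" "k \<le> b" for k
    using nonneg[OF that] by (simp add: a_def)
  have "w k = 0" if "k < b" for k
    using affine_recurrence_vanishing[of b w a k] rec a_nonneg that by (simp add: w_def)
  then show ?thesis
    using v by (intro eq_vecI) (auto simp: w_def)
qed

lemma Jmat_invertible:
  assumes "\<And>k. 0 < k \<Longrightarrow> k \<le> b \<Longrightarrow> 0 \<le> lam * s k"
  shows "invertible_mat (Jmat b lam s)"
proof (rule det_nonzero_imp_invertible_mat[OF Jmat_carrier])
  show "det (Jmat b lam s) \<noteq> 0"
  proof
    assume "det (Jmat b lam s) = 0"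
    then obtain v where v: "v \<in> carrier_vec b" "Jmat b lam s *\<^sub>v v = 0\<^sub>v b" and "v \<noteq> 0\<^sub>v b"
      using det_0_iff_vec_prod_zero_field[OF Jmat_carrier] by blast
    moreover have "v = 0\<^sub>v b"
      using assms v by (rule Jmat_kernel_trivial)
    ultimately show False by simp
  qed
qed

text \<open>Only \<open>\<lambda> \<ge> 0\<close> and \<open>s(k) \<ge> 0\<close> are used.\<close>

theorem lemma4:
  fixes b N :: nat and \<gamma> \<alpha> :: real and s :: "nat \<Rightarrow> real"
  assumes "b \<ge> 1" and "N \<ge> 1" and "0 < \<gamma>" and "\<gamma> \<le> 1" and "\<alpha> > 0"
    and "s 1 \<le> 1"
    and "\<And>k. 1 \<le> k \<Longrightarrow> k < b \<Longrightarrow> s (k + 1) \<le> s k"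
    and "s b \<ge> 0"
  shows "invertible_mat (Jmat b (1 - \<gamma> / real N powr \<alpha>) s)"
proof (rule Jmat_invertible)
  fix k :: nat
  assume k: "0 < k" "k \<le> b"
  have "1 \<le> real N powr \<alpha>"
    using assms(2,5) by (simp add: ge_one_powr_ge_zero)
  then have lam_nonneg: "0 \<le> 1 - \<gamma> / real N powr \<alpha>"
    using assms(4) by (auto simp: divide_le_eq_1)
  have "s b \<le> s k"
    using \<open>k \<le> b\<close> by (induction rule: inc_induct) (use k assms(7) in \<open>auto intro: order_trans\<close>)
  with assms(8) lam_nonneg show "0 \<le> (1 - \<gamma> / real N powr \<alpha>) * s k"
    by simp
qed

end
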